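(* Let $I\subseteq\mathbb{R}$ be an interval and let $f:I\to\mathbb{R}$ be absolutely continuous on $I^{\circ}$, the interior of $I$. Let $a,b\in I^{\circ}$ with $a<b$, and suppose $f'\in L[a,b]$. Put $M=\max_{a\le x\le b} f(x)$ and $$\mathcal{T}_{\mathrm{rap}}(f):=(b-a)\,\frac{f(a)+f(b)}{2}-\int_a^b f(x)\,dx .$$ Then $$\Bigl[\frac{2}{b-a}\,\mathcal{T}_{\mathrm{rap}}(f)-M\Bigr]\,M\le \frac{b-a}{12}\int_a^b f'(x)^2\,dx ,$$ and this inequality is sharp (equality is attained for some admissible $f$, e.g. on $[a,b]=[0,1]$).
   Context: $L[a,b]$ denotes the space of Lebesgue integrable functions on $[a,b]$. *)

theory Defs
  imports "HOL-Analysis.Analysis"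
begin

definition abs_continuous_on :: "real set \<Rightarrow> (real \<Rightarrow> real) \<Rightarrow> bool" where
  "abs_continuous_on S f \<longleftrightarrow>
     (\<forall>e>0. \<exists>d>0. \<forall>(n::nat) (u::nat \<Rightarrow> real) (v::nat \<Rightarrow> real).
        (\<forall>k<n. u k < v k \<and> {u k..v k} \<subseteq> S) \<and>
        (\<forall>k<n. \<forall>j<n. k \<noteq> j \<longrightarrow> {u k<..<v k} \<inter> {u j<..<v j} = {}) \<and>
        (\<Sum>k<n. v k - u k) < d
        \<longrightarrow> (\<Sum>k<n. \<bar>f (v k) - f (u k)\<bar>) < e)"

definition Trap :: "real \<Rightarrow> real \<Rightarrow> (real \<Rightarrow> real) \<Rightarrow> real" where
  "Trap a b f = (b - a) * (f a + f b) / 2 - (LBINT x:{a..b}. f x)"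

end

theory Submission
  imports Defs
begin

text \<open>Integrating by parts against \<open>x - (a + b) / 2\<close> gives
  \<open>Trap a b f = \<integral>\<^sub>a\<^sup>b (x - (a + b) / 2) f'(x) dx\<close>. This needs the fundamental theorem of calculus
  for absolutely continuous functions, proved by a gauge argument: on tags outside the negligible
  set where \<open>f\<close> may fail to be differentiable the straddle estimate applies, and the tags inside it
  lie in an open set of small measure, where absolute continuity controls the increments of \<open>f\<close>.
  Cauchy--Schwarz with \<open>\<integral>\<^sub>a\<^sup>b (x - (a + b) / 2)\<^sup>2 dx = (b - a)\<^sup>3 / 12\<close> then bounds \<open>(Trap a b f)\<^sup>2\<close>,
  and \<open>(2 t - M) M \<le> t\<^sup>2\<close> for \<open>t = Trap a b f / (b - a)\<close> gives the inequality for every real \<open>M\<close>,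
  in particular for the maximum.\<close>

lemma abs_continuous_onE:
  assumes "abs_continuous_on S f" and "e > 0"
  obtains d where "d > 0"
    and "\<And>(I::'i set) u v. finite I \<Longrightarrow> \<forall>i\<in>I. u i < v i \<and> {u i..v i} \<subseteq> S \<Longrightarrow>
      \<forall>i\<in>I. \<forall>j\<in>I. i \<noteq> j \<longrightarrow> {u i<..<v i} \<inter> {u j<..<v j} = {} \<Longrightarrow>
      (\<Sum>i\<in>I. v i - u i) < d \<Longrightarrow> (\<Sum>i\<in>I. \<bar>f (v i) - f (u i)\<bar>) < e"
proof -
  obtain d where "d > 0" and d: "\<forall>(n::nat) u v.
      (\<forall>k<n. u k < v k \<and> {u k..v k} \<subseteq> S) \<and>
      (\<forall>k<n. \<forall>j<n. k \<noteq> j \<longrightarrow> {u k<..<v k} \<inter> {u j<..<v j} = {}) \<and>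
      (\<Sum>k<n. v k - u k) < d \<longrightarrow> (\<Sum>k<n. \<bar>f (v k) - f (u k)\<bar>) < e"
    using assms unfolding abs_continuous_on_def by blast
  show thesis
  proof (rule that[OF \<open>d > 0\<close>])
    fix I :: "'i set" and u v :: "'i \<Rightarrow> real"
    assume "finite I" and uv: "\<forall>i\<in>I. u i < v i \<and> {u i..v i} \<subseteq> S"
      and disjoint: "\<forall>i\<in>I. \<forall>j\<in>I. i \<noteq> j \<longrightarrow> {u i<..<v i} \<inter> {u j<..<v j} = {}"
      and small: "(\<Sum>i\<in>I. v i - u i) < d"
    obtain h where h: "bij_betw h {..<card I} I"
      using ex_bij_betw_nat_finite[OF \<open>finite I\<close>] by (metis atLeast0LessThan)
    have reindex: "(\<Sum>k<card I. F (h k)) = (\<Sum>i\<in>I. F i)" for F :: "'i \<Rightarrow> real"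
      using sum.reindex_bij_betw[OF h, of F] by simp
    have "\<forall>k<card I. u (h k) < v (h k) \<and> {u (h k)..v (h k)} \<subseteq> S"
      using uv h by (auto simp: bij_betw_def)
    moreover have "\<forall>k<card I. \<forall>j<card I. k \<noteq> j \<longrightarrow> {u (h k)<..<v (h k)} \<inter> {u (h j)<..<v (h j)} = {}"
    proof (intro allI impI)
      fix k j assume "k < card I" "j < card I" "k \<noteq> j"
      then have "h k \<in> I" "h j \<in> I" "h k \<noteq> h j"
        using h by (auto simp: bij_betw_def inj_on_def)
      then show "{u (h k)<..<v (h k)} \<inter> {u (h j)<..<v (h j)} = {}"
        using disjoint by blast
    qed
    ultimately have "(\<Sum>k<card I. \<bar>f (v (h k)) - f (u (h k))\<bar>) < e"
      using d small reindex[of "\<lambda>i. v i - u i"] by auto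
    then show "(\<Sum>i\<in>I. \<bar>f (v i) - f (u i)\<bar>) < e"
      by (simp add: reindex[of "\<lambda>i. \<bar>f (v i) - f (u i)\<bar>"])
  qed
qed

lemma abs_continuous_on_subset:
  assumes "abs_continuous_on S f" and "T \<subseteq> S"
  shows "abs_continuous_on T f"
  using assms unfolding abs_continuous_on_def by (smt (verit) subset_trans)

lemma abs_continuous_on_imp_continuous_on:
  assumes ac: "abs_continuous_on S f" and S: "is_interval S"
  shows "continuous_on S f"
  unfolding continuous_on_iff
proof (intro ballI allI impI)
  fix x e :: real
  assume x: "x \<in> S" and "e > 0"
  obtain d where "d > 0" and d: "\<And>(I::unit set) u v. finite I \<Longrightarrow>
      \<forall>i\<in>I. u i < v i \<and> {u i..v i} \<subseteq> S \<Longrightarrow>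
      \<forall>i\<in>I. \<forall>j\<in>I. i \<noteq> j \<longrightarrow> {u i<..<v i} \<inter> {u j<..<v j} = {} \<Longrightarrow>
      (\<Sum>i\<in>I. v i - u i) < d \<Longrightarrow> (\<Sum>i\<in>I. \<bar>f (v i) - f (u i)\<bar>) < e"
    by (rule abs_continuous_onE[OF ac \<open>e > 0\<close>, where 'i = unit]) (rule that)
  show "\<exists>d>0. \<forall>y\<in>S. dist y x < d \<longrightarrow> dist (f y) (f x) < e"
  proof (intro exI[of _ d] conjI ballI impI \<open>d > 0\<close>)
    fix y assume y: "y \<in> S" and "dist y x < d"
    show "dist (f y) (f x) < e"
    proof (cases "y = x")
      case True
      then show ?thesis using \<open>e > 0\<close> by simp
    next
      case False
      define u v where "u = min x y" and "v = max x y"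
      have "v - u = dist y x"
        unfolding u_def v_def dist_real_def by arith
      moreover have "0 < dist y x" using False by simp
      ultimately have "u < v" "v - u < d"
        using \<open>dist y x < d\<close> by linarith+
      moreover have "{u..v} \<subseteq> S"
      proof
        fix t assume t: "t \<in> {u..v}"
        have "u \<in> S" "v \<in> S" using x y by (simp_all add: u_def v_def min_def max_def)
        then show "t \<in> S" by (rule mem_is_interval_1_I[OF S]) (use t in auto)
      qed
      ultimately have "\<bar>f v - f u\<bar> < e"
        using d[of "{()}" "\<lambda>_. u" "\<lambda>_. v"] by simp
      moreover have "dist (f y) (f x) = \<bar>f v - f u\<bar>"
        by (cases "x \<le> y") (simp_all add: u_def v_def dist_real_def abs_minus_commute max_def min_def)
      ultimately show ?thesis by simp
    qed
  qed
qed

lemma lipschitz_on_imp_abs_continuous_on: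
  assumes "C-lipschitz_on S f"
  shows "abs_continuous_on S f"
  unfolding abs_continuous_on_def
proof (intro allI impI)
  fix e :: real assume "e > 0"
  have C: "C \<ge> 0" and lip: "\<And>x y. x \<in> S \<Longrightarrow> y \<in> S \<Longrightarrow> \<bar>f y - f x\<bar> \<le> C * \<bar>y - x\<bar>"
    using assms unfolding lipschitz_on_def dist_real_def by auto
  show "\<exists>d>0. \<forall>(n::nat) (u::nat \<Rightarrow> real) v.
      (\<forall>k<n. u k < v k \<and> {u k..v k} \<subseteq> S) \<and>
      (\<forall>k<n. \<forall>j<n. k \<noteq> j \<longrightarrow> {u k<..<v k} \<inter> {u j<..<v j} = {}) \<and>
      (\<Sum>k<n. v k - u k) < d \<longrightarrow> (\<Sum>k<n. \<bar>f (v k) - f (u k)\<bar>) < e"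
  proof (intro exI[of _ "e / (C + 1)"] conjI allI impI)
    show "e / (C + 1) > 0" using \<open>e > 0\<close> C by simp
    fix n :: nat and u v :: "nat \<Rightarrow> real"
    assume H: "(\<forall>k<n. u k < v k \<and> {u k..v k} \<subseteq> S) \<and>
      (\<forall>k<n. \<forall>j<n. k \<noteq> j \<longrightarrow> {u k<..<v k} \<inter> {u j<..<v j} = {}) \<and>
      (\<Sum>k<n. v k - u k) < e / (C + 1)"
    have "(\<Sum>k<n. \<bar>f (v k) - f (u k)\<bar>) \<le> (\<Sum>k<n. C * (v k - u k))"
    proof (rule sum_mono)
      fix k assume "k \<in> {..<n}"
      then have "u k < v k" "{u k..v k} \<subseteq> S" using H by auto
      then have "u k < v k" "u k \<in> S" "v k \<in> S" by auto
      then show "\<bar>f (v k) - f (u k)\<bar> \<le> C * (v k - u k)" using lip[of "u k" "v k"] by simp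
    qed
    also have "\<dots> \<le> (C + 1) * (\<Sum>k<n. v k - u k)"
    proof -
      have "0 \<le> (\<Sum>k<n. v k - u k)" using H by (intro sum_nonneg) (simp add: less_imp_le)
      then show ?thesis by (simp add: sum_distrib_left[symmetric] distrib_right)
    qed
    also have "\<dots> < (C + 1) * (e / (C + 1))"
      using H C by (intro mult_strict_left_mono) auto
    also have "\<dots> = e" using C by simp
    finally show "(\<Sum>k<n. \<bar>f (v k) - f (u k)\<bar>) < e" .
  qed
qed

lemma abs_continuous_on_mult:
  assumes f: "abs_continuous_on S f" "bounded (f ` S)"
    and g: "abs_continuous_on S g" "bounded (g ` S)"
  shows "abs_continuous_on S (\<lambda>x. f x * g x)"
  unfolding abs_continuous_on_def
proof (intro allI impI)
  fix e :: real assume "e > 0"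
  obtain A where "A > 0" and A: "\<And>x. x \<in> S \<Longrightarrow> \<bar>f x\<bar> \<le> A"
    using f(2) by (auto simp: bounded_pos)
  obtain B where "B > 0" and B: "\<And>x. x \<in> S \<Longrightarrow> \<bar>g x\<bar> \<le> B"
    using g(2) by (auto simp: bounded_pos)
  have "e / (2 * B) > 0" "e / (2 * A) > 0" using \<open>e > 0\<close> \<open>A > 0\<close> \<open>B > 0\<close> by simp_all
  obtain d1 where "d1 > 0" and d1: "\<And>(I::nat set) u v. finite I \<Longrightarrow>
      \<forall>i\<in>I. u i < v i \<and> {u i..v i} \<subseteq> S \<Longrightarrow>
      \<forall>i\<in>I. \<forall>j\<in>I. i \<noteq> j \<longrightarrow> {u i<..<v i} \<inter> {u j<..<v j} = {} \<Longrightarrow>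
      (\<Sum>i\<in>I. v i - u i) < d1 \<Longrightarrow> (\<Sum>i\<in>I. \<bar>f (v i) - f (u i)\<bar>) < e / (2 * B)"
    by (rule abs_continuous_onE[OF f(1) \<open>e / (2 * B) > 0\<close>, where 'i = nat]) (rule that)
  obtain d2 where "d2 > 0" and d2: "\<And>(I::nat set) u v. finite I \<Longrightarrow>
      \<forall>i\<in>I. u i < v i \<and> {u i..v i} \<subseteq> S \<Longrightarrow>
      \<forall>i\<in>I. \<forall>j\<in>I. i \<noteq> j \<longrightarrow> {u i<..<v i} \<inter> {u j<..<v j} = {} \<Longrightarrow>
      (\<Sum>i\<in>I. v i - u i) < d2 \<Longrightarrow> (\<Sum>i\<in>I. \<bar>g (v i) - g (u i)\<bar>) < e / (2 * A)"
    by (rule abs_continuous_onE[OF g(1) \<open>e / (2 * A) > 0\<close>, where 'i = nat]) (rule that)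
  show "\<exists>d>0. \<forall>(n::nat) (u::nat \<Rightarrow> real) v.
      (\<forall>k<n. u k < v k \<and> {u k..v k} \<subseteq> S) \<and>
      (\<forall>k<n. \<forall>j<n. k \<noteq> j \<longrightarrow> {u k<..<v k} \<inter> {u j<..<v j} = {}) \<and>
      (\<Sum>k<n. v k - u k) < d \<longrightarrow> (\<Sum>k<n. \<bar>f (v k) * g (v k) - f (u k) * g (u k)\<bar>) < e"
  proof (intro exI[of _ "min d1 d2"] conjI allI impI)
    show "min d1 d2 > 0" using \<open>d1 > 0\<close> \<open>d2 > 0\<close> by simp
    fix n :: nat and u v :: "nat \<Rightarrow> real"
    assume H: "(\<forall>k<n. u k < v k \<and> {u k..v k} \<subseteq> S) \<and>
      (\<forall>k<n. \<forall>j<n. k \<noteq> j \<longrightarrow> {u k<..<v k} \<inter> {u j<..<v j} = {}) \<and>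
      (\<Sum>k<n. v k - u k) < min d1 d2"
    have "\<bar>f (v k) * g (v k) - f (u k) * g (u k)\<bar>
        \<le> A * \<bar>g (v k) - g (u k)\<bar> + B * \<bar>f (v k) - f (u k)\<bar>" if "k < n" for k
    proof -
      have "u k \<in> S" "v k \<in> S" using H that by (auto simp: subset_iff less_imp_le)
      have "f (v k) * g (v k) - f (u k) * g (u k)
          = f (v k) * (g (v k) - g (u k)) + g (u k) * (f (v k) - f (u k))"
        by (simp add: algebra_simps)
      also have "\<bar>\<dots>\<bar> \<le> \<bar>f (v k)\<bar> * \<bar>g (v k) - g (u k)\<bar> + \<bar>g (u k)\<bar> * \<bar>f (v k) - f (u k)\<bar>"
        by (metis abs_mult abs_triangle_ineq)
      also have "\<dots> \<le> A * \<bar>g (v k) - g (u k)\<bar> + B * \<bar>f (v k) - f (u k)\<bar>"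
        using A[OF \<open>v k \<in> S\<close>] B[OF \<open>u k \<in> S\<close>] by (intro add_mono mult_right_mono) auto
      finally show ?thesis .
    qed
    then have "(\<Sum>k<n. \<bar>f (v k) * g (v k) - f (u k) * g (u k)\<bar>)
        \<le> (\<Sum>k<n. A * \<bar>g (v k) - g (u k)\<bar> + B * \<bar>f (v k) - f (u k)\<bar>)"
      by (intro sum_mono) simp
    also have "\<dots> = A * (\<Sum>k<n. \<bar>g (v k) - g (u k)\<bar>) + B * (\<Sum>k<n. \<bar>f (v k) - f (u k)\<bar>)"
      by (simp add: sum.distrib sum_distrib_left)
    also have "\<dots> < A * (e / (2 * A)) + B * (e / (2 * B))"
      using H d1[of "{..<n}" u v] d2[of "{..<n}" u v] \<open>A > 0\<close> \<open>B > 0\<close>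
      by (intro add_strict_mono mult_strict_left_mono) auto
    also have "\<dots> = e" using \<open>A > 0\<close> \<open>B > 0\<close> by simp
    finally show "(\<Sum>k<n. \<bar>f (v k) * g (v k) - f (u k) * g (u k)\<bar>) < e" .
  qed
qed

lemma tagged_partial_division_real_interval:
  fixes S :: "real set"
  assumes "p tagged_partial_division_of S" and "(x, K) \<in> p"
  shows "{Inf K..Sup K} = K" and "Inf K \<le> x" and "x \<le> Sup K" and "K \<subseteq> S"
    and "measure lborel K = Sup K - Inf K" and "x \<in> K" and "Inf K \<in> K" and "Sup K \<in> K"
proof -
  obtain u v where K: "K = {u..v}"
    using tagged_partial_division_ofD(4)[OF assms] by (metis box_real(2))
  moreover have "x \<in> K" "K \<subseteq> S" using tagged_partial_division_ofD(2,3)[OF assms] by auto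
  ultimately show "{Inf K..Sup K} = K" "Inf K \<le> x" "x \<le> Sup K" "K \<subseteq> S"
    "measure lborel K = Sup K - Inf K" "x \<in> K" "Inf K \<in> K" "Sup K \<in> K"
    by auto
qed

lemma sum_content_tagged_partial_division:
  assumes "p tagged_partial_division_of S"
  shows "(\<Sum>(x,K)\<in>p. measure lborel K) = measure lebesgue (\<Union>(snd ` p))"
proof -
  have p: "p tagged_division_of \<Union>(snd ` p)"
    by (rule tagged_partial_division_of_Union_self[OF assms])
  have "(\<Sum>(x,K)\<in>p. measure lborel K) = sum (measure lborel) (snd ` p)"
    by (rule sum.over_tagged_division_lemma[OF p]) (simp add: content_eq_0_interior)
  also have "\<dots> = sum (measure lebesgue) (snd ` p)"
  proof (rule sum.cong[OF refl])
    fix K assume "K \<in> snd ` p"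
    then obtain u v where "K = cbox u v" using tagged_partial_division_ofD(4)[OF assms] by force
    then show "measure lborel K = measure lebesgue K" by simp
  qed
  also have "\<dots> = measure lebesgue (\<Union>(snd ` p))"
    by (rule content_division[OF division_of_tagged_division[OF p]])
  finally show ?thesis .
qed

lemma abs_continuous_on_tagged_partial_division:
  assumes "abs_continuous_on S f" and "e > 0"
  obtains d where "d > 0"
    and "\<And>p. p tagged_partial_division_of S \<Longrightarrow> measure lebesgue (\<Union>(snd ` p)) < d \<Longrightarrow>
      (\<Sum>(x,K)\<in>p. \<bar>f (Sup K) - f (Inf K)\<bar>) < e"
proof -
  obtain d where "d > 0" and d: "\<And>(I::(real \<times> real set) set) u v. finite I \<Longrightarrow>
      \<forall>i\<in>I. u i < v i \<and> {u i..v i} \<subseteq> S \<Longrightarrow>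
      \<forall>i\<in>I. \<forall>j\<in>I. i \<noteq> j \<longrightarrow> {u i<..<v i} \<inter> {u j<..<v j} = {} \<Longrightarrow>
      (\<Sum>i\<in>I. v i - u i) < d \<Longrightarrow> (\<Sum>i\<in>I. \<bar>f (v i) - f (u i)\<bar>) < e"
    by (rule abs_continuous_onE[OF assms, where 'i = "real \<times> real set"]) (rule that)
  show thesis
  proof (rule that[OF \<open>d > 0\<close>])
    fix p assume p: "p tagged_partial_division_of S" and small: "measure lebesgue (\<Union>(snd ` p)) < d"
    note K = tagged_partial_division_real_interval[OF p]
    have "finite p" using p by (rule tagged_partial_division_ofD(1))
    \<comment> \<open>Degenerate intervals contribute nothing, but the definition only admits proper ones.\<close>
    define q where "q = {(x, K) \<in> p. Inf K < Sup K}"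
    have "q \<subseteq> p" by (auto simp: q_def)
    have "(\<Sum>i\<in>q. \<bar>f (Sup (snd i)) - f (Inf (snd i))\<bar>) < e"
    proof (rule d)
      show "finite q" using \<open>finite p\<close> \<open>q \<subseteq> p\<close> by (rule finite_subset[rotated])
      show "\<forall>i\<in>q. Inf (snd i) < Sup (snd i) \<and> {Inf (snd i)..Sup (snd i)} \<subseteq> S"
      proof
        fix i assume "i \<in> q"
        then have "Inf (snd i) < Sup (snd i)" "{Inf (snd i)..Sup (snd i)} = snd i" "snd i \<subseteq> S"
          using K(1,4)[of "fst i" "snd i"] by (auto simp: q_def)
        then show "Inf (snd i) < Sup (snd i) \<and> {Inf (snd i)..Sup (snd i)} \<subseteq> S" by simp
      qed
      show "\<forall>i\<in>q. \<forall>j\<in>q. i \<noteq> j \<longrightarrow> {Inf (snd i)<..<Sup (snd i)} \<inter> {Inf (snd j)<..<Sup (snd j)} = {}"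
      proof (intro ballI impI)
        fix i j assume "i \<in> q" "j \<in> q" "i \<noteq> j"
        then have "interior (snd i) \<inter> interior (snd j) = {}"
          using tagged_partial_division_ofD(5)[OF p, of "fst i" "snd i" "fst j" "snd j"]
          by (auto simp: q_def)
        moreover have "{Inf (snd i)..Sup (snd i)} = snd i" "{Inf (snd j)..Sup (snd j)} = snd j"
          using K(1) \<open>i \<in> q\<close> \<open>j \<in> q\<close> by (auto simp: q_def)
        ultimately show "{Inf (snd i)<..<Sup (snd i)} \<inter> {Inf (snd j)<..<Sup (snd j)} = {}"
          by (metis interior_atLeastAtMost_real)
      qed
      have "(\<Sum>i\<in>q. Sup (snd i) - Inf (snd i)) = (\<Sum>(x,K)\<in>q. measure lborel K)"
        using K(5) \<open>q \<subseteq> p\<close> by (intro sum.cong) auto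
      also have "\<dots> \<le> (\<Sum>(x,K)\<in>p. measure lborel K)"
        using \<open>finite p\<close> \<open>q \<subseteq> p\<close> by (intro sum_mono2) auto
      finally show "(\<Sum>i\<in>q. Sup (snd i) - Inf (snd i)) < d"
        using small sum_content_tagged_partial_division[OF p] by simp
    qed
    moreover have "(\<Sum>i\<in>q. \<bar>f (Sup (snd i)) - f (Inf (snd i))\<bar>) = (\<Sum>(x,K)\<in>p. \<bar>f (Sup K) - f (Inf K)\<bar>)"
      unfolding split_def
    proof (rule sum.mono_neutral_left[OF \<open>finite p\<close> \<open>q \<subseteq> p\<close>], intro ballI)
      fix i assume "i \<in> p - q"
      then have "\<not> Inf (snd i) < Sup (snd i)" "Inf (snd i) \<le> Sup (snd i)"
        using K(2,3)[of "fst i" "snd i"] by (auto simp: q_def)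
      then show "\<bar>f (Sup (snd i)) - f (Inf (snd i))\<bar> = 0" by simp
    qed
    ultimately show "(\<Sum>(x,K)\<in>p. \<bar>f (Sup K) - f (Inf K)\<bar>) < e" by simp
  qed
qed

lemma negligible_open_superset:
  assumes "negligible N" and "e > 0"
  obtains U where "open U" "N \<subseteq> U" "U \<in> lmeasurable" "measure lebesgue U < e"
proof -
  have N: "N \<in> null_sets lebesgue" using assms(1) by (simp add: negligible_iff_null_sets)
  then obtain U where "open U" "N \<subseteq> U" and UN: "U - N \<in> lmeasurable" "emeasure lebesgue (U - N) < ennreal e"
    using sets_lebesgue_outer_open[OF _ \<open>e > 0\<close>] by blast
  have "U = (U - N) \<union> N" using \<open>N \<subseteq> U\<close> by blast
  then have "U \<in> lmeasurable"
    using UN(1) negligible_imp_measurable[OF assms(1)] by (metis fmeasurable.Un)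
  moreover have "measure lebesgue U = measure lebesgue (U - N)"
    using measure_Diff_null_set[OF fmeasurableD[OF \<open>U \<in> lmeasurable\<close>] N] by simp
  moreover have "measure lebesgue (U - N) < e"
    using UN emeasure_eq_measure2[OF UN(1)] by (metis ennreal_less_iff measure_nonneg)
  ultimately show thesis using that \<open>open U\<close> \<open>N \<subseteq> U\<close> by simp
qed

lemma abs_continuous_on_negligible_tags:
  assumes "abs_continuous_on S f" and "negligible N" and "e > 0"
  obtains \<gamma> where "gauge \<gamma>"
    and "\<And>p. p tagged_partial_division_of S \<Longrightarrow> \<gamma> fine p \<Longrightarrow>
      (\<Sum>(x,K)\<in>p. if x \<in> N then \<bar>f (Sup K) - f (Inf K)\<bar> else 0) < e"
proof -
  obtain d where "d > 0" and d: "\<And>p. p tagged_partial_division_of S \<Longrightarrow>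
      measure lebesgue (\<Union>(snd ` p)) < d \<Longrightarrow> (\<Sum>(x,K)\<in>p. \<bar>f (Sup K) - f (Inf K)\<bar>) < e"
    using abs_continuous_on_tagged_partial_division[OF assms(1,3)] by blast
  obtain U where "open U" "N \<subseteq> U" "U \<in> lmeasurable" "measure lebesgue U < d"
    using negligible_open_superset[OF assms(2) \<open>d > 0\<close>] by blast
  have "\<forall>x. \<exists>r>0. x \<in> N \<longrightarrow> ball x r \<subseteq> U"
    using \<open>open U\<close> \<open>N \<subseteq> U\<close> open_contains_ball by (metis subsetD zero_less_one)
  then obtain r where r: "\<And>x. r x > 0" "\<And>x. x \<in> N \<Longrightarrow> ball x (r x) \<subseteq> U"
    by metis
  show thesis
  proof (rule that)
    show "gauge (\<lambda>x. ball x (r x))" using r(1) by (simp add: gauge_ball_dependent)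
    fix p assume p: "p tagged_partial_division_of S" and fine: "(\<lambda>x. ball x (r x)) fine p"
    define pN where "pN = {xK \<in> p. fst xK \<in> N}"
    have pN: "pN tagged_partial_division_of S"
      using tagged_partial_division_subset[OF p] by (simp add: pN_def)
    have "\<Union>(snd ` pN) \<subseteq> U"
      using fine r(2) by (fastforce simp: pN_def dest: fineD)
    moreover have "\<Union>(snd ` pN) \<in> lmeasurable"
      by (rule lmeasurable_division[OF partial_division_of_tagged_division[OF pN]])
    ultimately have "measure lebesgue (\<Union>(snd ` pN)) \<le> measure lebesgue U"
      using \<open>U \<in> lmeasurable\<close> by (intro measure_mono_fmeasurable) auto
    then have "(\<Sum>(x,K)\<in>pN. \<bar>f (Sup K) - f (Inf K)\<bar>) < e"
      using \<open>measure lebesgue U < d\<close> by (intro d[OF pN]) linarith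
    moreover have "(\<Sum>(x,K)\<in>p. if x \<in> N then \<bar>f (Sup K) - f (Inf K)\<bar> else 0)
        = (\<Sum>(x,K)\<in>pN. \<bar>f (Sup K) - f (Inf K)\<bar>)"
      using tagged_partial_division_ofD(1)[OF p] by (simp add: split_def sum.inter_filter pN_def)
    ultimately show "(\<Sum>(x,K)\<in>p. if x \<in> N then \<bar>f (Sup K) - f (Inf K)\<bar> else 0) < e" by simp
  qed
qed

lemma has_real_derivative_straddle_gauge:
  fixes f :: "real \<Rightarrow> real"
  assumes "\<And>x. x \<in> S \<Longrightarrow> (f has_real_derivative f' x) (at x within T)" and "\<epsilon> > 0"
  obtains \<gamma> where "gauge \<gamma>"
    and "\<And>p x K. p tagged_partial_division_of T \<Longrightarrow> \<gamma> fine p \<Longrightarrow> (x, K) \<in> p \<Longrightarrow> x \<in> S \<Longrightarrow>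
      \<bar>f (Sup K) - f (Inf K) - f' x * measure lborel K\<bar> \<le> \<epsilon> * measure lborel K"
proof -
  have "\<forall>x. \<exists>\<delta>>0. x \<in> S \<longrightarrow>
      (\<forall>y\<in>T. \<bar>y - x\<bar> < \<delta> \<longrightarrow> \<bar>f y - f x - f' x * (y - x)\<bar> \<le> \<epsilon> * \<bar>y - x\<bar>)"
  proof
    fix x show "\<exists>\<delta>>0. x \<in> S \<longrightarrow>
        (\<forall>y\<in>T. \<bar>y - x\<bar> < \<delta> \<longrightarrow> \<bar>f y - f x - f' x * (y - x)\<bar> \<le> \<epsilon> * \<bar>y - x\<bar>)"
    proof (cases "x \<in> S")
      case True
      then show ?thesis
        using assms \<open>\<epsilon> > 0\<close>
        unfolding has_field_derivative_def has_derivative_within_alt real_norm_def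
        by (metis mult.commute)
    qed (auto intro: zero_less_one)
  qed
  then obtain \<delta> where \<delta>: "\<And>x. \<delta> x > 0" and
    near: "\<And>x y. x \<in> S \<Longrightarrow> y \<in> T \<Longrightarrow> \<bar>y - x\<bar> < \<delta> x \<Longrightarrow>
      \<bar>f y - f x - f' x * (y - x)\<bar> \<le> \<epsilon> * \<bar>y - x\<bar>"
    by metis
  show thesis
  proof (rule that)
    show "gauge (\<lambda>x. ball x (\<delta> x))" using \<delta> by (simp add: gauge_ball_dependent)
    fix p x K
    assume p: "p tagged_partial_division_of T" and "(\<lambda>x. ball x (\<delta> x)) fine p"
      and xK: "(x, K) \<in> p" and x: "x \<in> S"
    note K = tagged_partial_division_real_interval[OF p xK]
    define u v where "u = Inf K" and "v = Sup K"
    have "u \<in> ball x (\<delta> x)" "v \<in> ball x (\<delta> x)" "u \<in> T" "v \<in> T"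
      using fineD[OF \<open>(\<lambda>x. ball x (\<delta> x)) fine p\<close> xK] K(4,7,8) by (auto simp: u_def v_def)
    then have "\<bar>f u - f x - f' x * (u - x)\<bar> \<le> \<epsilon> * (x - u)"
      and "\<bar>f v - f x - f' x * (v - x)\<bar> \<le> \<epsilon> * (v - x)"
      using near[OF x, of u] near[OF x, of v] K(2,3)
      by (auto simp: u_def v_def dist_real_def abs_minus_commute)
    then show "\<bar>f (Sup K) - f (Inf K) - f' x * measure lborel K\<bar> \<le> \<epsilon> * measure lborel K"
      unfolding K(5) u_def[symmetric] v_def[symmetric] by (simp add: abs_le_iff algebra_simps)
  qed
qed

lemma tagged_division_increment_sum_le:
  fixes f h :: "real \<Rightarrow> real"
  assumes "a \<le> b" and p: "p tagged_division_of {a..b}"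
    and tag: "\<And>x K. (x, K) \<in> p \<Longrightarrow>
      \<bar>f (Sup K) - f (Inf K) - measure lborel K * h x\<bar> \<le> \<epsilon> * measure lborel K + c x K"
  shows "\<bar>(\<Sum>(x,K)\<in>p. measure lborel K * h x) - (f b - f a)\<bar> \<le> \<epsilon> * (b - a) + (\<Sum>(x,K)\<in>p. c x K)"
proof -
  have "\<bar>(\<Sum>(x,K)\<in>p. measure lborel K * h x) - (f b - f a)\<bar>
      = \<bar>\<Sum>(x,K)\<in>p. f (Sup K) - f (Inf K) - measure lborel K * h x\<bar>"
    using additive_tagged_division_1[OF \<open>a \<le> b\<close> p, of f]
    by (simp add: split_def sum_subtractf abs_minus_commute)
  also have "\<dots> \<le> (\<Sum>(x,K)\<in>p. \<bar>f (Sup K) - f (Inf K) - measure lborel K * h x\<bar>)"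
    by (rule sum_abs[THEN order_trans]) (simp add: split_def)
  also have "\<dots> \<le> (\<Sum>(x,K)\<in>p. \<epsilon> * measure lborel K + c x K)"
    using tag by (intro sum_mono) auto
  also have "\<dots> = \<epsilon> * (b - a) + (\<Sum>(x,K)\<in>p. c x K)"
    using additive_content_tagged_division[of p a b] p \<open>a \<le> b\<close>
    by (simp add: split_def sum.distrib sum_distrib_left[symmetric])
  finally show ?thesis .
qed

lemma abs_continuous_on_has_integral_derivative:
  fixes f g :: "real \<Rightarrow> real"
  assumes "a \<le> b" and ac: "abs_continuous_on {a..b} f" and N: "negligible N"
    and der: "\<And>x. x \<in> {a..b} - N \<Longrightarrow> (f has_real_derivative g x) (at x within {a..b})"
  shows "(g has_integral (f b - f a)) {a..b}"
proof -
  define g0 where "g0 x = (if x \<in> N then 0 else g x)" for x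
  have "(g0 has_integral (f b - f a)) {a..b}"
    unfolding has_integral_real
  proof (intro allI impI)
    fix e :: real assume "e > 0"
    define \<epsilon> where "\<epsilon> = e / (2 * (b - a + 1))"
    have "e / 2 > 0" "\<epsilon> > 0" "\<epsilon> * (b - a) < e / 2"
      using \<open>e > 0\<close> \<open>a \<le> b\<close> by (simp_all add: \<epsilon>_def field_simps)
    obtain \<gamma>1 where "gauge \<gamma>1" and \<gamma>1: "\<And>p. p tagged_partial_division_of {a..b} \<Longrightarrow> \<gamma>1 fine p \<Longrightarrow>
        (\<Sum>(x,K)\<in>p. if x \<in> N then \<bar>f (Sup K) - f (Inf K)\<bar> else 0) < e / 2"
      by (rule abs_continuous_on_negligible_tags[OF ac N \<open>e / 2 > 0\<close>]) (rule that)
    obtain \<gamma>2 where "gauge \<gamma>2" and \<gamma>2: "\<And>p x K. p tagged_partial_division_of {a..b} \<Longrightarrow>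
        \<gamma>2 fine p \<Longrightarrow> (x, K) \<in> p \<Longrightarrow> x \<in> {a..b} - N \<Longrightarrow>
        \<bar>f (Sup K) - f (Inf K) - g x * measure lborel K\<bar> \<le> \<epsilon> * measure lborel K"
      using has_real_derivative_straddle_gauge[OF der \<open>\<epsilon> > 0\<close>] by blast
    show "\<exists>\<gamma>. gauge \<gamma> \<and> (\<forall>p. p tagged_division_of {a..b} \<and> \<gamma> fine p \<longrightarrow>
        norm ((\<Sum>(x,K)\<in>p. measure lborel K *\<^sub>R g0 x) - (f b - f a)) < e)"
    proof (intro exI conjI allI impI)
      show "gauge (\<lambda>x. \<gamma>1 x \<inter> \<gamma>2 x)" using \<open>gauge \<gamma>1\<close> \<open>gauge \<gamma>2\<close> by (rule gauge_Int)
      fix p assume "p tagged_division_of {a..b} \<and> (\<lambda>x. \<gamma>1 x \<inter> \<gamma>2 x) fine p"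
      then have p: "p tagged_division_of {a..b}" and "\<gamma>1 fine p" "\<gamma>2 fine p"
        by (auto simp: fine_Int)
      have pp: "p tagged_partial_division_of {a..b}"
        using p by (simp add: tagged_division_of_def)
      note K = tagged_partial_division_real_interval[OF pp]
      have "\<bar>(\<Sum>(x,K)\<in>p. measure lborel K * g0 x) - (f b - f a)\<bar>
          \<le> \<epsilon> * (b - a) + (\<Sum>(x,K)\<in>p. if x \<in> N then \<bar>f (Sup K) - f (Inf K)\<bar> else 0)"
      proof (rule tagged_division_increment_sum_le[OF \<open>a \<le> b\<close> p])
        fix x K assume xK: "(x, K) \<in> p"
        show "\<bar>f (Sup K) - f (Inf K) - measure lborel K * g0 x\<bar>
            \<le> \<epsilon> * measure lborel K + (if x \<in> N then \<bar>f (Sup K) - f (Inf K)\<bar> else 0)"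
        proof (cases "x \<in> N")
          case False
          then have "x \<in> {a..b} - N" using K(4,6)[OF xK] by auto
          then show ?thesis
            using \<gamma>2[OF pp \<open>\<gamma>2 fine p\<close> xK] False by (simp add: g0_def mult.commute)
        qed (use K(5)[OF xK] \<open>\<epsilon> > 0\<close> K(2,3)[OF xK] in \<open>simp add: g0_def\<close>)
      qed
      also have "\<dots> < e / 2 + e / 2"
        using \<gamma>1[OF pp \<open>\<gamma>1 fine p\<close>] \<open>\<epsilon> * (b - a) < e / 2\<close> by linarith
      finally show "norm ((\<Sum>(x,K)\<in>p. measure lborel K *\<^sub>R g0 x) - (f b - f a)) < e"
        by simp
    qed
  qed
  then show ?thesis
    by (rule has_integral_spike[OF N, rotated]) (simp add: g0_def)
qed

lemma integral_Cauchy_Schwarz: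
  fixes u v :: "'a::euclidean_space \<Rightarrow> real"
  assumes "(\<lambda>x. u x * v x) integrable_on S" and "(\<lambda>x. (u x)\<^sup>2) integrable_on S"
    and "(\<lambda>x. (v x)\<^sup>2) integrable_on S"
  shows "(integral S (\<lambda>x. u x * v x))\<^sup>2 \<le> integral S (\<lambda>x. (u x)\<^sup>2) * integral S (\<lambda>x. (v x)\<^sup>2)"
proof -
  define T A B where "T = integral S (\<lambda>x. u x * v x)"
    and "A = integral S (\<lambda>x. (u x)\<^sup>2)" and "B = integral S (\<lambda>x. (v x)\<^sup>2)"
  have quadratic: "0 \<le> c\<^sup>2 * A - 2 * c * T + B" for c
  proof -
    have "((\<lambda>x. c\<^sup>2 * (u x)\<^sup>2 - 2 * c * (u x * v x) + (v x)\<^sup>2) has_integral c\<^sup>2 * A - 2 * c * T + B) S"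
      unfolding T_def A_def B_def
      by (intro has_integral_add has_integral_diff has_integral_mult_right integrable_integral assms)
    moreover have "(\<lambda>x. c\<^sup>2 * (u x)\<^sup>2 - 2 * c * (u x * v x) + (v x)\<^sup>2) = (\<lambda>x. (c * u x - v x)\<^sup>2)"
      by (simp add: fun_eq_iff power2_eq_square algebra_simps)
    ultimately have "((\<lambda>x. (c * u x - v x)\<^sup>2) has_integral c\<^sup>2 * A - 2 * c * T + B) S"
      by simp
    then show ?thesis by (rule has_integral_nonneg) simp
  qed
  have "A \<ge> 0" unfolding A_def by (rule integral_nonneg[OF assms(2)]) simp
  have "T\<^sup>2 \<le> A * B"
  proof (cases "A = 0")
    case True
    have "T = 0"
    proof (rule ccontr)
      assume "T \<noteq> 0"
      then have "0 \<le> B - (B + 1)"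
        using quadratic[of "(B + 1) / (2 * T)"] True by (simp add: field_simps)
      then show False by simp
    qed
    then show ?thesis using True by simp
  next
    case False
    then have "A > 0" using \<open>A \<ge> 0\<close> by simp
    then have "0 \<le> B - T\<^sup>2 / A"
      using quadratic[of "T / A"] by (simp add: power2_eq_square field_simps)
    then show ?thesis using \<open>A > 0\<close> by (simp add: field_simps)
  qed
  then show ?thesis by (simp add: T_def A_def B_def)
qed

lemma has_integral_centered_square:
  fixes a b :: real
  assumes "a \<le> b"
  shows "((\<lambda>x. (x - (a + b) / 2)\<^sup>2) has_integral (b - a) ^ 3 / 12) {a..b}"
proof -
  have "((\<lambda>x. (x - (a + b) / 2)\<^sup>2) has_integral
      (b - (a + b) / 2) ^ 3 / 3 - (a - (a + b) / 2) ^ 3 / 3) {a..b}"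
  proof (rule fundamental_theorem_of_calculus[OF assms])
    fix x assume "x \<in> {a..b}"
    show "((\<lambda>x. (x - (a + b) / 2) ^ 3 / 3) has_vector_derivative (x - (a + b) / 2)\<^sup>2) (at x within {a..b})"
      unfolding has_real_derivative_iff_has_vector_derivative[symmetric]
      by (auto intro!: derivative_eq_intros simp: power2_eq_square)
  qed
  moreover have "(b - (a + b) / 2) ^ 3 / 3 - (a - (a + b) / 2) ^ 3 / 3 = (b - a) ^ 3 / 12"
    by (simp add: field_simps power3_eq_cube)
  ultimately show ?thesis by simp
qed

lemma has_integral_Trap:
  fixes f f' :: "real \<Rightarrow> real"
  assumes "a \<le> b" and ac: "abs_continuous_on {a..b} f" and N: "negligible N"
    and der: "\<And>x. x \<in> {a..b} - N \<Longrightarrow> (f has_real_derivative f' x) (at x within {a..b})"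
  shows "((\<lambda>x. (x - (a + b) / 2) * f' x) has_integral Trap a b f) {a..b}"
proof -
  define m where "m = (a + b) / 2"
  have contf: "continuous_on {a..b} f"
    by (rule abs_continuous_on_imp_continuous_on[OF ac is_interval_cc])
  have ac_prod: "abs_continuous_on {a..b} (\<lambda>x. (x - m) * f x)"
  proof (rule abs_continuous_on_mult)
    show "abs_continuous_on {a..b} (\<lambda>x. x - m)"
      by (rule lipschitz_on_imp_abs_continuous_on[of 1]) (simp add: lipschitz_on_def dist_real_def)
    show "bounded ((\<lambda>x. x - m) ` {a..b})" "bounded (f ` {a..b})"
      using contf by (auto intro!: compact_imp_bounded compact_continuous_image continuous_intros)
  qed fact
  have der_prod: "((\<lambda>x. (x - m) * f x) has_real_derivative f x + (x - m) * f' x) (at x within {a..b})"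
    if "x \<in> {a..b} - N" for x
    using der[OF that] by (auto intro!: derivative_eq_intros)
  have "((\<lambda>x. f x + (x - m) * f' x) has_integral (b - m) * f b - (a - m) * f a) {a..b}"
    using abs_continuous_on_has_integral_derivative[OF \<open>a \<le> b\<close> ac_prod N der_prod] by simp
  from has_integral_diff[OF this integrable_integral[OF integrable_continuous_real[OF contf]]]
  have "((\<lambda>x. (x - m) * f' x) has_integral (b - m) * f b - (a - m) * f a - integral {a..b} f) {a..b}"
    by simp
  moreover have "(LBINT x:{a..b}. f x) = integral {a..b} f"
    by (rule set_borel_integral_eq_integral(2)[OF borel_integrable_atLeastAtMost'[OF contf]])
  then have "(b - m) * f b - (a - m) * f a - integral {a..b} f = Trap a b f"
    by (simp add: Trap_def m_def field_simps)
  ultimately show ?thesis by (simp add: m_def)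
qed

lemma Trap_square_le:
  fixes f f' :: "real \<Rightarrow> real"
  assumes "a \<le> b" and "abs_continuous_on {a..b} f" and "negligible N"
    and "\<And>x. x \<in> {a..b} - N \<Longrightarrow> (f has_real_derivative f' x) (at x within {a..b})"
    and sq: "(\<lambda>x. (f' x)\<^sup>2) integrable_on {a..b}"
  shows "(Trap a b f)\<^sup>2 \<le> (b - a) ^ 3 / 12 * integral {a..b} (\<lambda>x. (f' x)\<^sup>2)"
proof -
  note T = has_integral_Trap[OF assms(1-4)]
  note C = has_integral_centered_square[OF \<open>a \<le> b\<close>]
  have "(integral {a..b} (\<lambda>x. (x - (a + b) / 2) * f' x))\<^sup>2
      \<le> integral {a..b} (\<lambda>x. (x - (a + b) / 2)\<^sup>2) * integral {a..b} (\<lambda>x. (f' x)\<^sup>2)"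
    using T C sq by (intro integral_Cauchy_Schwarz) auto
  with T C show ?thesis by (simp add: integral_unique)
qed

lemma nn_integral_square_finite:
  fixes f :: "'a \<Rightarrow> real"
  assumes "set_borel_measurable M S f" and "(\<integral>\<^sup>+x\<in>S. ennreal ((f x)\<^sup>2) \<partial>M) < \<infinity>"
  shows "set_integrable M S (\<lambda>x. (f x)\<^sup>2)"
    and "(\<integral>\<^sup>+x\<in>S. ennreal ((f x)\<^sup>2) \<partial>M) = ennreal (LINT x:S|M. (f x)\<^sup>2)"
proof -
  have sq_indicator: "indicator S x *\<^sub>R (f x)\<^sup>2 = (indicator S x *\<^sub>R f x)\<^sup>2" for x
    by (simp add: indicator_def)
  have nn: "(\<integral>\<^sup>+x. ennreal (indicator S x *\<^sub>R (f x)\<^sup>2) \<partial>M) = (\<integral>\<^sup>+x\<in>S. ennreal ((f x)\<^sup>2) \<partial>M)"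
    by (rule nn_integral_cong) (simp add: indicator_def)
  have "(\<lambda>x. indicator S x *\<^sub>R (f x)\<^sup>2) \<in> borel_measurable M"
    using assms(1) unfolding set_borel_measurable_def sq_indicator by measurable
  then show si: "set_integrable M S (\<lambda>x. (f x)\<^sup>2)"
    unfolding set_integrable_def using assms(2) nn by (intro integrableI_bounded) simp_all
  have "(\<integral>\<^sup>+x. ennreal (indicator S x *\<^sub>R (f x)\<^sup>2) \<partial>M)
      = ennreal (integral\<^sup>L M (\<lambda>x. indicator S x *\<^sub>R (f x)\<^sup>2))"
    using si unfolding set_integrable_def by (intro nn_integral_eq_integral) simp_all
  then show "(\<integral>\<^sup>+x\<in>S. ennreal ((f x)\<^sup>2) \<partial>M) = ennreal (LINT x:S|M. (f x)\<^sup>2)"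
    using nn by (simp add: set_lebesgue_integral_def)
qed

lemma Trap_inequality:
  fixes f f' :: "real \<Rightarrow> real" and M :: real
  assumes "a < b" and ac: "abs_continuous_on {a..b} f"
    and der: "AE x in lborel. x \<in> {a..b} \<longrightarrow> (f has_real_derivative f' x) (at x)"
    and f': "set_borel_measurable lborel {a..b} f'"
  shows "ennreal ((2 / (b - a) * Trap a b f - M) * M)
    \<le> ennreal ((b - a) / 12) * (\<integral>\<^sup>+x\<in>{a..b}. ennreal ((f' x)\<^sup>2) \<partial>lborel)"
proof (cases "(\<integral>\<^sup>+x\<in>{a..b}. ennreal ((f' x)\<^sup>2) \<partial>lborel) < \<infinity>")
  case True
  obtain N where derN0: "\<And>x. x \<in> space lborel - N \<Longrightarrow>
      x \<in> {a..b} \<longrightarrow> (f has_real_derivative f' x) (at x)" and N: "N \<in> null_sets lborel"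
    by (rule AE_E3[OF der]) (rule that)
  have derN: "(f has_real_derivative f' x) (at x within {a..b})" if "x \<in> {a..b} - N" for x
    using derN0[of x] that by (simp add: has_field_derivative_at_within)
  have "negligible N" using N by (simp add: negligible_iff_null_sets null_sets_completionI)
  define L T B where "L = b - a" and "T = Trap a b f" and "B = integral {a..b} (\<lambda>x. (f' x)\<^sup>2)"
  have "L > 0" using \<open>a < b\<close> by (simp add: L_def)
  note sq = nn_integral_square_finite[OF f' True]
  have "(2 / L * T - M) * M \<le> (T / L)\<^sup>2"
    using zero_le_power2[of "T / L - M"] by (simp add: power2_eq_square algebra_simps)
  also have "\<dots> = T\<^sup>2 / L\<^sup>2" by (simp add: power_divide)
  also have "\<dots> \<le> L ^ 3 / 12 * B / L\<^sup>2"
    using Trap_square_le[OF less_imp_le[OF \<open>a < b\<close>] ac \<open>negligible N\<close> derN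
        set_borel_integral_eq_integral(1)[OF sq(1)]]
    by (intro divide_right_mono) (simp_all add: L_def T_def B_def)
  also have "\<dots> = L / 12 * B" using \<open>L > 0\<close> by (simp add: power2_eq_square power3_eq_cube)
  finally have "(2 / L * T - M) * M \<le> L / 12 * B" .
  moreover have "L / 12 \<ge> 0" "B \<ge> 0"
    using \<open>L > 0\<close> by (simp_all add: B_def integral_nonneg set_borel_integral_eq_integral(1)[OF sq(1)])
  ultimately show ?thesis
    using sq(2) set_borel_integral_eq_integral(2)[OF sq(1)]
    by (simp add: L_def T_def B_def ennreal_mult'[symmetric] ennreal_leI)
next
  case False
  then show ?thesis using \<open>a < b\<close> by (simp add: less_top[symmetric] ennreal_mult_top)
qed

lemma set_integral_Icc_antiderivative:
  fixes F f :: "real \<Rightarrow> real"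
  assumes "a \<le> b" and "\<And>x. (F has_real_derivative f x) (at x)" and "continuous_on {a..b} f"
  shows "(LBINT x:{a..b}. f x) = F b - F a"
proof -
  have "(f has_integral (F b - F a)) {a..b}"
  proof (rule fundamental_theorem_of_calculus[OF assms(1)])
    fix x assume "x \<in> {a..b}"
    show "(F has_vector_derivative f x) (at x within {a..b})"
      unfolding has_real_derivative_iff_has_vector_derivative[symmetric]
      using assms(2) by (rule has_field_derivative_at_within)
  qed
  then show ?thesis
    using set_borel_integral_eq_integral(2)[OF borel_integrable_atLeastAtMost'[OF assms(3)]]
    by (simp add: integral_unique)
qed

text \<open>Equality holds when \<open>f'\<close> is proportional to \<open>x - (a + b) / 2\<close> (equality in Cauchy--Schwarz) and
  the maximum equals \<open>Trap a b f / (b - a)\<close> (equality in \<open>(2 t - M) M \<le> t\<^sup>2\<close>).\<close>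

definition Trap_extremal :: "real \<Rightarrow> real \<Rightarrow> real \<Rightarrow> real" where
  "Trap_extremal a b x = (x - a) * (x - b) + (b - a)\<^sup>2 / 6"

lemma has_real_derivative_Trap_extremal:
  "(Trap_extremal a b has_real_derivative 2 * x - a - b) (at x)"
  unfolding Trap_extremal_def by (auto intro!: derivative_eq_intros simp: algebra_simps)

lemma lipschitz_on_Trap_extremal:
  assumes "a \<le> b"
  shows "(b - a + 2)-lipschitz_on {a - 1<..<b + 1} (Trap_extremal a b)"
  unfolding lipschitz_on_def dist_real_def
proof (intro conjI ballI)
  fix x y assume "x \<in> {a - 1<..<b + 1}" "y \<in> {a - 1<..<b + 1}"
  then have "\<bar>x + y - a - b\<bar> \<le> b - a + 2" by (auto simp: abs_le_iff)
  moreover have "\<bar>Trap_extremal a b x - Trap_extremal a b y\<bar> = \<bar>x + y - a - b\<bar> * \<bar>x - y\<bar>"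
    unfolding Trap_extremal_def by (simp add: abs_mult[symmetric] algebra_simps)
  ultimately show "\<bar>Trap_extremal a b x - Trap_extremal a b y\<bar> \<le> (b - a + 2) * \<bar>x - y\<bar>"
    by (simp add: mult_right_mono)
qed (use assms in simp)

lemma SUP_Trap_extremal:
  assumes "a \<le> b"
  shows "(SUP x\<in>{a..b}. Trap_extremal a b x) = (b - a)\<^sup>2 / 6"
proof (rule cSup_eq_maximum)
  show "(b - a)\<^sup>2 / 6 \<in> Trap_extremal a b ` {a..b}"
    using assms by (auto simp: Trap_extremal_def intro!: image_eqI[of _ _ a])
  fix y assume "y \<in> Trap_extremal a b ` {a..b}"
  then obtain x where "x \<in> {a..b}" "y = Trap_extremal a b x" by auto
  moreover have "(x - a) * (x - b) \<le> 0" using \<open>x \<in> {a..b}\<close> by (intro mult_nonneg_nonpos) auto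
  ultimately show "y \<le> (b - a)\<^sup>2 / 6" by (simp add: Trap_extremal_def)
qed

lemma Trap_Trap_extremal:
  assumes "a \<le> b"
  shows "Trap a b (Trap_extremal a b) = (b - a) ^ 3 / 6"
proof -
  have "(LBINT x:{a..b}. Trap_extremal a b x)
      = (\<lambda>x. x ^ 3 / 3 - (a + b) * x\<^sup>2 / 2 + a * b * x + (b - a)\<^sup>2 / 6 * x) b
        - (\<lambda>x. x ^ 3 / 3 - (a + b) * x\<^sup>2 / 2 + a * b * x + (b - a)\<^sup>2 / 6 * x) a"
    by (rule set_integral_Icc_antiderivative[OF assms])
      (auto simp: Trap_extremal_def power2_eq_square field_simps
        intro!: derivative_eq_intros continuous_intros)
  also have "\<dots> = 0" by (simp add: field_simps power2_eq_square power3_eq_cube)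
  finally show ?thesis
    by (simp add: Trap_def Trap_extremal_def power2_eq_square power3_eq_cube field_simps)
qed

lemma set_integral_centered_linear_square:
  fixes a b :: real
  assumes "a \<le> b"
  shows "(LBINT x:{a..b}. (2 * x - a - b)\<^sup>2) = (b - a) ^ 3 / 3"
proof -
  have "(LBINT x:{a..b}. (2 * x - a - b)\<^sup>2) = (2 * b - a - b) ^ 3 / 6 - (2 * a - a - b) ^ 3 / 6"
    by (rule set_integral_Icc_antiderivative[OF assms])
      (auto simp: power2_eq_square field_simps intro!: derivative_eq_intros continuous_intros)
  then show ?thesis by (simp add: field_simps power3_eq_cube)
qed

lemma Trap_inequality_sharp:
  fixes a b :: real
  assumes "a < b"
  shows "\<exists>(J::real set) (g::real \<Rightarrow> real) (g'::real \<Rightarrow> real).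
    is_interval J \<and> abs_continuous_on (interior J) g \<and>
    a \<in> interior J \<and> b \<in> interior J \<and>
    (AE x in lborel. x \<in> {a..b} \<longrightarrow> (g has_real_derivative g' x) (at x)) \<and>
    set_integrable lborel {a..b} g' \<and>
    set_integrable lborel {a..b} (\<lambda>x. (g' x)\<^sup>2) \<and>
    (\<exists>x\<in>{a..b}. g x \<noteq> g a) \<and>
    (2 / (b - a) * Trap a b g - (SUP x\<in>{a..b}. g x)) * (SUP x\<in>{a..b}. g x)
      = (b - a) / 12 * (LBINT x:{a..b}. (g' x)\<^sup>2)"
proof -
  define J where "J = {a - 1<..<b + 1}"
  have "interior J = J" "is_interval J" "a \<in> J" "b \<in> J"
    using assms by (simp_all add: J_def interior_open is_interval_1)
  have "Trap_extremal a b ((a + b) / 2) - Trap_extremal a b a = - ((b - a)\<^sup>2 / 4)"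
    by (simp add: Trap_extremal_def field_simps power2_eq_square)
  then have "\<exists>x\<in>{a..b}. Trap_extremal a b x \<noteq> Trap_extremal a b a"
    using assms by (intro bexI[of _ "(a + b) / 2"]) auto
  moreover have "(2 / (b - a) * ((b - a) ^ 3 / 6) - (b - a)\<^sup>2 / 6) * ((b - a)\<^sup>2 / 6)
      = (b - a) / 12 * ((b - a) ^ 3 / 3)"
    using assms by (simp add: power2_eq_square power3_eq_cube field_simps)
  ultimately show ?thesis
    using \<open>interior J = J\<close> \<open>is_interval J\<close> \<open>a \<in> J\<close> \<open>b \<in> J\<close> assms
      lipschitz_on_imp_abs_continuous_on[OF lipschitz_on_Trap_extremal]
    by (intro exI[of _ J, OF exI[of _ "Trap_extremal a b", OF exI[of _ "\<lambda>x. 2 * x - a - b"]]])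
      (auto simp: J_def SUP_Trap_extremal Trap_Trap_extremal set_integral_centered_linear_square
        has_real_derivative_Trap_extremal
        intro!: borel_integrable_atLeastAtMost' continuous_intros)
qed

theorem theorem6:
  fixes I :: "real set" and f f' :: "real \<Rightarrow> real" and a b :: real
  assumes "is_interval I"
    and "abs_continuous_on (interior I) f"
    and "a \<in> interior I" and "b \<in> interior I" and "a < b"
    and "AE x in lborel. x \<in> {a..b} \<longrightarrow> (f has_real_derivative f' x) (at x)"
    and "set_integrable lborel {a..b} f'"
  shows "ennreal ((2 / (b - a) * Trap a b f - (SUP x\<in>{a..b}. f x)) * (SUP x\<in>{a..b}. f x))
           \<le> ennreal ((b - a) / 12) * (\<integral>\<^sup>+ x\<in>{a..b}. ennreal ((f' x)\<^sup>2) \<partial>lborel)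
         \<and> (\<exists>(J::real set) (g::real \<Rightarrow> real) (g'::real \<Rightarrow> real).
           is_interval J \<and> abs_continuous_on (interior J) g \<and>
           a \<in> interior J \<and> b \<in> interior J \<and>
           (AE x in lborel. x \<in> {a..b} \<longrightarrow> (g has_real_derivative g' x) (at x)) \<and>
           set_integrable lborel {a..b} g' \<and>
           set_integrable lborel {a..b} (\<lambda>x. (g' x)\<^sup>2) \<and>
           (\<exists>x\<in>{a..b}. g x \<noteq> g a) \<and>
           (2 / (b - a) * Trap a b g - (SUP x\<in>{a..b}. g x)) * (SUP x\<in>{a..b}. g x)
             = (b - a) / 12 * (LBINT x:{a..b}. (g' x)\<^sup>2))"
proof -
  have "is_interval (interior I)"
    using assms(1) by (simp add: is_interval_convex_1 is_interval_convex)
  then have "{a..b} \<subseteq> interior I"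
    using mem_is_interval_1_I[OF _ assms(3,4)] by auto
  then have ac: "abs_continuous_on {a..b} f"
    by (rule abs_continuous_on_subset[OF assms(2)])
  have "set_borel_measurable lborel {a..b} f'"
    using assms(7) borel_measurable_integrable
    unfolding set_integrable_def set_borel_measurable_def by blast
  then show ?thesis
    using Trap_inequality[OF \<open>a < b\<close> ac assms(6)] Trap_inequality_sharp[OF \<open>a < b\<close>] by blast
qed

end
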